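(* Let $(S_n)_{n\ge0}$ be defined by $S_0=3$, $S_1=1$, $S_2=3$ and $S_{n+1}=S_n+S_{n-1}+S_{n-2}$ for $n\ge 2$. Let $\alpha,\beta,\gamma$ be the roots of $x^3-x^2-x-1=0$ and $C_n=\alpha^n\beta^n+\alpha^n\gamma^n+\beta^n\gamma^n$ for $n\ge0$. Then for all $n\ge 0$, $$S_n^4=S_{4n}+2C_{2n}+4C_n^2+4S_{2n}C_n=S_{4n}-4S_n+4S_{2n}C_n+6C_n^2.$$
   Context: $S_n$ is the generalized Lucas (generalized Tribonacci) sequence. *)

theory Defs
  imports Complex_Main
begin

fun S :: "nat \<Rightarrow> int" where
  "S 0 = 3"
| "S (Suc 0) = 1"
| "S (Suc (Suc 0)) = 3"
| "S (Suc (Suc (Suc n))) = S (Suc (Suc n)) + S (Suc n) + S n"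

definition C :: "complex \<Rightarrow> complex \<Rightarrow> complex \<Rightarrow> nat \<Rightarrow> complex" where
  "C a b c n = a ^ n * b ^ n + a ^ n * c ^ n + b ^ n * c ^ n"

end

theory Submission
  imports Defs
begin

(* By Vieta, the roots satisfy a + b + c = 1, ab + ac + bc = -1 and abc = 1, so S n is the
   power sum a^n + b^n + c^n. With x = a^n, y = b^n, z = c^n both claims become polynomial
   identities in x, y, z: the expansion of (x + y + z)^4 in symmetric functions, and
   x^2 y^2 + x^2 z^2 + y^2 z^2 = (xy + xz + yz)^2 - 2xyz(x + y + z) with xyz = 1. *)

lemma vieta_cubic:
  fixes a b c :: "'a :: {idom, ring_char_0}"
  assumes roots: "\<And>x. x ^ 3 - x ^ 2 - x - 1 = (x - a) * (x - b) * (x - c)"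
  shows "a + b + c = 1" and "a * b + a * c + b * c = -1" and "a * b * c = 1"
proof -
  have at_0: "a * b * c = 1"
    using roots[of 0] by (simp add: algebra_simps)
  have at_1: "-2 = 1 - (a + b + c) + (a * b + a * c + b * c) - a * b * c"
    using roots[of 1] by (simp add: algebra_simps)
  have at_minus_1: "2 = 1 + (a + b + c) + (a * b + a * c + b * c) + a * b * c"
    using roots[of "-1"] by (simp add: algebra_simps)
  have "2 * (a * b + a * c + b * c) = 2 * -1"
    using at_0 at_1 at_minus_1 by algebra
  then show e2: "a * b + a * c + b * c = -1"
    by (metis mult_left_cancel zero_neq_numeral)
  show "a + b + c = 1"
    using at_0 at_1 e2 by algebra
  show "a * b * c = 1"
    by (fact at_0)
qed

lemma root_of_cubic:
  fixes a b c x :: "'a :: comm_ring_1"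
  assumes roots: "\<And>x. x ^ 3 - x ^ 2 - x - 1 = (x - a) * (x - b) * (x - c)"
    and "x = a \<or> x = b \<or> x = c"
  shows "x ^ 3 = x ^ 2 + x + 1"
proof -
  have "x ^ 3 - x ^ 2 - x - 1 = 0"
    using roots[of x] assms(2) by auto
  then show ?thesis
    by (simp add: algebra_simps)
qed

lemma power_recurrence_of_cubic_root:
  fixes x :: "'a :: comm_ring_1"
  assumes "x ^ 3 = x ^ 2 + x + 1"
  shows "x ^ Suc (Suc (Suc n)) = x ^ Suc (Suc n) + x ^ Suc n + x ^ n"
proof -
  have "x ^ Suc (Suc (Suc n)) = x ^ n * x ^ 3"
    by (simp add: power_add numeral_3_eq_3)
  also have "\<dots> = x ^ n * (x ^ 2 + x + 1)"
    using assms by simp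
  finally show ?thesis
    by (simp add: algebra_simps power2_eq_square)
qed

lemma S_eq_power_sum:
  fixes a b c :: "'a :: comm_ring_1"
  assumes "\<And>x. x = a \<or> x = b \<or> x = c \<Longrightarrow> x ^ 3 = x ^ 2 + x + 1"
    and e1: "a + b + c = 1" and e2: "a * b + a * c + b * c = -1"
  shows "of_int (S n) = a ^ n + b ^ n + c ^ n"
proof (induction n rule: S.induct)
  case 1
  then show ?case by simp
next
  case 2
  then show ?case using e1 by simp
next
  case 3
  have "a ^ 2 + b ^ 2 + c ^ 2 = (a + b + c) ^ 2 - 2 * (a * b + a * c + b * c)"
    by (simp add: power2_eq_square algebra_simps)
  then show ?case
    using e1 e2 by (simp add: power2_eq_square)
next
  case (4 n)
  have "x ^ Suc (Suc (Suc n)) = x ^ Suc (Suc n) + x ^ Suc n + x ^ n"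
    if "x = a \<or> x = b \<or> x = c" for x
    using power_recurrence_of_cubic_root assms(1)[OF that] .
  then show ?case
    using 4 by simp
qed

lemma fourth_power_of_sum:
  fixes x y z :: "'a :: comm_ring_1"
  shows "(x + y + z) ^ 4
      = (x ^ 4 + y ^ 4 + z ^ 4) + 2 * (x ^ 2 * y ^ 2 + x ^ 2 * z ^ 2 + y ^ 2 * z ^ 2)
        + 4 * (x * y + x * z + y * z) ^ 2 + 4 * (x ^ 2 + y ^ 2 + z ^ 2) * (x * y + x * z + y * z)"
  by (simp add: eval_nat_numeral algebra_simps)

lemma sum_squared_products:
  fixes x y z :: "'a :: comm_ring_1"
  shows "x ^ 2 * y ^ 2 + x ^ 2 * z ^ 2 + y ^ 2 * z ^ 2
      = (x * y + x * z + y * z) ^ 2 - 2 * (x * y * z) * (x + y + z)"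
  by (simp add: power2_eq_square algebra_simps)

theorem mainTheorem9:
  fixes \<alpha> \<beta> \<gamma> :: complex and n :: nat
  assumes roots: "\<And>x::complex. x ^ 3 - x ^ 2 - x - 1 = (x - \<alpha>) * (x - \<beta>) * (x - \<gamma>)"
  shows "(of_int (S n) :: complex) ^ 4
           = of_int (S (4 * n)) + 2 * C \<alpha> \<beta> \<gamma> (2 * n) + 4 * (C \<alpha> \<beta> \<gamma> n) ^ 2
             + 4 * of_int (S (2 * n)) * C \<alpha> \<beta> \<gamma> n
       \<and> of_int (S (4 * n)) + 2 * C \<alpha> \<beta> \<gamma> (2 * n) + 4 * (C \<alpha> \<beta> \<gamma> n) ^ 2
             + 4 * of_int (S (2 * n)) * C \<alpha> \<beta> \<gamma> n
           = of_int (S (4 * n)) - 4 * of_int (S n) + 4 * of_int (S (2 * n)) * C \<alpha> \<beta> \<gamma> n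
             + 6 * (C \<alpha> \<beta> \<gamma> n) ^ 2"
proof -
  define x y z where "x = \<alpha> ^ n" and "y = \<beta> ^ n" and "z = \<gamma> ^ n"
  have power_sum: "of_int (S m) = \<alpha> ^ m + \<beta> ^ m + \<gamma> ^ m" for m
    using S_eq_power_sum root_of_cubic[OF roots] vieta_cubic[OF roots] by blast
  have powers: "w ^ (k * n) = (w ^ n) ^ k" for w :: complex and k
    by (simp add: power_mult[symmetric] mult.commute)
  have Sn: "of_int (S n) = x + y + z"
    and S2n: "of_int (S (2 * n)) = x ^ 2 + y ^ 2 + z ^ 2"
    and S4n: "of_int (S (4 * n)) = x ^ 4 + y ^ 4 + z ^ 4"
    unfolding power_sum powers x_def y_def z_def by simp_all
  have Cn: "C \<alpha> \<beta> \<gamma> n = x * y + x * z + y * z"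
    and C2n: "C \<alpha> \<beta> \<gamma> (2 * n) = x ^ 2 * y ^ 2 + x ^ 2 * z ^ 2 + y ^ 2 * z ^ 2"
    unfolding C_def powers x_def y_def z_def by simp_all
  have "x * y * z = 1"
    unfolding x_def y_def z_def using vieta_cubic(3)[OF roots]
    by (metis power_mult_distrib power_one)
  then show ?thesis
    unfolding Sn S2n S4n Cn C2n fourth_power_of_sum sum_squared_products
    by (simp add: algebra_simps)
qed

end
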